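(* Let $m,n$ be positive integers. There is an explicit bijection between the set of $m\times n$ partial alternating sign matrices and the set of $(m,n)$-partial height-function matrices.
   Context: An $m\times n$ partial alternating sign matrix is an $m\times n$ matrix with entries in $\{-1,0,1\}$ such that: the entries of each row and of each column sum to $0$ or $1$; the nonzero entries in each row and in each column alternate in sign; in each column the first (topmost) nonzero entry, if any, is $1$, and in each row the last (rightmost) nonzero entry, if any, is $1$. An $(m,n)$-partial height-function matrix is an integer matrix $(h_{i,j})_{0\le i\le m,\,0\le j\le n}$ with all entries nonnegative, $h_{0,k}=k$ for $0\le k\le n$, $h_{\ell,0}=\ell$ for $0\le \ell\le m$, and such that any two horizontally or vertically adjacent entries differ by exactly $1$. *)

theory Defs
  imports Main
begin

text \<open>An m x n partial ASM uses
  indices 1..m (rows) and 1..n (columns); entries outside are required to be 0,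
  so that each matrix has a unique representation.\<close>

definition partial_asm :: "nat \<Rightarrow> nat \<Rightarrow> (nat \<Rightarrow> nat \<Rightarrow> int) \<Rightarrow> bool" where
  "partial_asm m n a \<longleftrightarrow>
     (\<forall>i j. \<not> (i \<in> {1..m} \<and> j \<in> {1..n}) \<longrightarrow> a i j = 0) \<and>
     (\<forall>i\<in>{1..m}. \<forall>j\<in>{1..n}. a i j \<in> {-1, 0, 1}) \<and>
     (\<forall>i\<in>{1..m}. (\<Sum>j=1..n. a i j) \<in> {0, 1}) \<and>
     (\<forall>j\<in>{1..n}. (\<Sum>i=1..m. a i j) \<in> {0, 1}) \<and>
     \<comment> \<open>nonzero entries of each row alternate in sign\<close>
     (\<forall>i\<in>{1..m}. \<forall>j1\<in>{1..n}. \<forall>j2\<in>{1..n}.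
        j1 < j2 \<and> a i j1 \<noteq> 0 \<and> a i j2 \<noteq> 0 \<and> (\<forall>j. j1 < j \<and> j < j2 \<longrightarrow> a i j = 0)
        \<longrightarrow> a i j2 = - a i j1) \<and>
     \<comment> \<open>nonzero entries of each column alternate in sign\<close>
     (\<forall>j\<in>{1..n}. \<forall>i1\<in>{1..m}. \<forall>i2\<in>{1..m}.
        i1 < i2 \<and> a i1 j \<noteq> 0 \<and> a i2 j \<noteq> 0 \<and> (\<forall>i. i1 < i \<and> i < i2 \<longrightarrow> a i j = 0)
        \<longrightarrow> a i2 j = - a i1 j) \<and>
     \<comment> \<open>topmost nonzero entry of each column is 1\<close>
     (\<forall>j\<in>{1..n}. \<forall>i\<in>{1..m}.
        a i j \<noteq> 0 \<and> (\<forall>i'. 1 \<le> i' \<and> i' < i \<longrightarrow> a i' j = 0) \<longrightarrow> a i j = 1) \<and>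
     \<comment> \<open>rightmost nonzero entry of each row is 1\<close>
     (\<forall>i\<in>{1..m}. \<forall>j\<in>{1..n}.
        a i j \<noteq> 0 \<and> (\<forall>j'. j < j' \<and> j' \<le> n \<longrightarrow> a i j' = 0) \<longrightarrow> a i j = 1)"

definition partial_hfm :: "nat \<Rightarrow> nat \<Rightarrow> (nat \<Rightarrow> nat \<Rightarrow> int) \<Rightarrow> bool" where
  "partial_hfm m n h \<longleftrightarrow>
     (\<forall>i j. \<not> (i \<le> m \<and> j \<le> n) \<longrightarrow> h i j = 0) \<and>
     (\<forall>i\<le>m. \<forall>j\<le>n. h i j \<ge> 0) \<and>
     (\<forall>k\<le>n. h 0 k = int k) \<and>
     (\<forall>l\<le>m. h l 0 = int l) \<and>
     (\<forall>i\<le>m. \<forall>j<n. \<bar>h i (Suc j) - h i j\<bar> = 1) \<and>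
     (\<forall>i<m. \<forall>j\<le>n. \<bar>h (Suc i) j - h i j\<bar> = 1)"

definition partial_asms :: "nat \<Rightarrow> nat \<Rightarrow> (nat \<Rightarrow> nat \<Rightarrow> int) set" where
  "partial_asms m n = {a. partial_asm m n a}"

definition partial_hfms :: "nat \<Rightarrow> nat \<Rightarrow> (nat \<Rightarrow> nat \<Rightarrow> int) set" where
  "partial_hfms m n = {h. partial_hfm m n h}"

end

theory Submission
  imports Defs
begin

(* Reading the columns from right to left, the row and column conditions of a partial ASM say that
   every line is a sign-alternating sequence whose first nonzero entry is 1, i.e. one whose prefix
   sums all lie in {0, 1}.  Hence the sum P(i, j) of the entries in rows 1..i and in the last j
   columns grows by 0 or 1 in each step along a row or a column, and h(i, j) = i + j - 2 P(i, j)
   is a partial height-function matrix.  Conversely, every step of a height-function matrix is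
   1 - 2 D with a descent indicator D in {0, 1}; the ASM is recovered as the vertical difference
   of the horizontal descent indicators, which equals the horizontal difference of the vertical
   ones, so its column and row prefix sums telescope to single indicators. *)

lemma sum_telescope_atLeast1:
  fixes f :: "nat \<Rightarrow> 'a::ab_group_add"
  shows "(\<Sum>k=1..K. f k - f (k - 1)) = f K - f 0"
  using sum_telescope''[of 0 K f] by simp

lemma prefix_sum_zero_run:
  fixes x :: "nat \<Rightarrow> 'a::comm_monoid_add"
  assumes "\<forall>k. a < k \<and> k \<le> b \<longrightarrow> x k = 0" "a \<le> b"
  shows "(\<Sum>k=1..b. x k) = (\<Sum>k=1..a. x k)"
  using assms by (induction b) (auto simp: le_Suc_eq)

lemma last_nonzero:
  fixes x :: "nat \<Rightarrow> 'a::zero"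
  assumes "\<exists>k\<in>{1..K}. x k \<noteq> 0"
  obtains k where "k \<in> {1..K}" "x k \<noteq> 0" "\<forall>k'. k < k' \<and> k' \<le> K \<longrightarrow> x k' = 0"
proof -
  let ?P = "\<lambda>k. k \<in> {1..K} \<and> x k \<noteq> 0"
  from assms obtain k0 where "?P k0" by blast
  moreover have "\<forall>k. ?P k \<longrightarrow> k \<le> K" by simp
  ultimately obtain k where k: "?P k" and greatest: "\<forall>k'. ?P k' \<longrightarrow> k' \<le> k"
    using Nat.ex_has_greatest_nat[of ?P k0 K] by blast
  have "x k' = 0" if "k < k'" "k' \<le> K" for k'
    using greatest[rule_format, of k'] k that by auto
  then show ?thesis using k that by blast
qed

definition alternating_seq :: "nat \<Rightarrow> (nat \<Rightarrow> int) \<Rightarrow> bool" where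
  "alternating_seq N x \<longleftrightarrow>
     (\<forall>k\<in>{1..N}. x k \<in> {-1, 0, 1}) \<and>
     (\<forall>k1\<in>{1..N}. \<forall>k2\<in>{1..N}.
        k1 < k2 \<and> x k1 \<noteq> 0 \<and> x k2 \<noteq> 0 \<and> (\<forall>k. k1 < k \<and> k < k2 \<longrightarrow> x k = 0)
        \<longrightarrow> x k2 = - x k1) \<and>
     (\<forall>k\<in>{1..N}. x k \<noteq> 0 \<and> (\<forall>k'. 1 \<le> k' \<and> k' < k \<longrightarrow> x k' = 0) \<longrightarrow> x k = 1)"

(* The second conjunct strengthens the induction: the last nonzero entry so far is +1 exactly when
   the running sum is 1. *)
lemma alternating_seq_prefix_sums:
  assumes x: "alternating_seq N x" and "K \<le> N"
  shows "(\<Sum>k=1..K. x k) \<in> {0, 1} \<and>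
    (\<forall>k\<in>{1..K}. x k \<noteq> 0 \<and> (\<forall>k'. k < k' \<and> k' \<le> K \<longrightarrow> x k' = 0) \<longrightarrow> x k = 2 * (\<Sum>k=1..K. x k) - 1)"
  using \<open>K \<le> N\<close>
proof (induction K)
  case 0
  then show ?case by simp
next
  case (Suc K)
  let ?s = "\<Sum>k=1..K. x k"
  have IH: "?s \<in> {0, 1}"
    "\<And>k. k \<in> {1..K} \<Longrightarrow> x k \<noteq> 0 \<Longrightarrow> \<forall>k'. k < k' \<and> k' \<le> K \<longrightarrow> x k' = 0 \<Longrightarrow> x k = 2 * ?s - 1"
    using Suc by auto
  show ?case
  proof (cases "x (Suc K) = 0")
    case True
    then show ?thesis using IH by (auto simp: le_Suc_eq)
  next
    case False
    have "x (Suc K) = 1 - 2 * ?s"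
    proof (cases "\<exists>k\<in>{1..K}. x k \<noteq> 0")
      case True
      then obtain k where k: "k \<in> {1..K}" "x k \<noteq> 0"
        and after_k: "\<forall>k'. k < k' \<and> k' \<le> K \<longrightarrow> x k' = 0"
        by (rule last_nonzero)
      have "\<forall>k'. k < k' \<and> k' < Suc K \<longrightarrow> x k' = 0" using after_k by auto
      then have "x (Suc K) = - x k"
        using x k False Suc.prems unfolding alternating_seq_def by auto
      then show ?thesis using IH(2)[OF k after_k] by simp
    next
      case False
      then show ?thesis using x \<open>x (Suc K) \<noteq> 0\<close> Suc.prems unfolding alternating_seq_def by auto
    qed
    then show ?thesis using IH(1) False by (auto simp: le_Suc_eq dest: spec[of _ "Suc K"])
  qed
qed

lemma prefix_sums_imp_alternating_seq:
  fixes x :: "nat \<Rightarrow> int"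
  assumes sums: "\<forall>K\<le>N. (\<Sum>k=1..K. x k) \<in> {0, 1}"
  shows "alternating_seq N x"
proof -
  define s where "s K = (\<Sum>k=1..K. x k)" for K
  have x_eq: "x k = s k - s (k - 1)" if "k \<ge> 1" for k
    using that unfolding s_def by (cases k) auto
  have entries: "x k \<in> {-1, 0, 1}" if "k \<in> {1..N}" for k
    using x_eq[of k] sums[rule_format, of k] sums[rule_format, of "k - 1"] that
    unfolding s_def by auto
  have nonzero: "x k = 1 - 2 * s (k - 1)" if "k \<in> {1..N}" "x k \<noteq> 0" for k
    using x_eq[of k] sums[rule_format, of k] sums[rule_format, of "k - 1"] that
    unfolding s_def by auto
  have zero_run: "s b = s a" if "\<forall>k. a < k \<and> k \<le> b \<longrightarrow> x k = 0" "a \<le> b" for a b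
    using prefix_sum_zero_run[OF that] unfolding s_def .
  show ?thesis
    unfolding alternating_seq_def
  proof (intro conjI ballI impI)
    fix k assume "k \<in> {1..N}"
    then show "x k \<in> {-1, 0, 1}" by (rule entries)
  next
    fix k1 k2
    assume k: "k1 \<in> {1..N}" "k2 \<in> {1..N}"
      and run: "k1 < k2 \<and> x k1 \<noteq> 0 \<and> x k2 \<noteq> 0 \<and> (\<forall>k. k1 < k \<and> k < k2 \<longrightarrow> x k = 0)"
    have "s (k2 - 1) = s k1" using run by (intro zero_run) auto
    moreover have "s k1 = s (k1 - 1) + x k1" using x_eq[of k1] k by simp
    moreover have "x k1 = 1 - 2 * s (k1 - 1)" "x k2 = 1 - 2 * s (k2 - 1)"
      using nonzero k run by auto
    ultimately show "x k2 = - x k1" by linarith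
  next
    fix k
    assume k: "k \<in> {1..N}" and first: "x k \<noteq> 0 \<and> (\<forall>k'. 1 \<le> k' \<and> k' < k \<longrightarrow> x k' = 0)"
    have "s (k - 1) = s 0" using first by (intro zero_run) auto
    moreover have "x k = 1 - 2 * s (k - 1)" using nonzero k first by auto
    ultimately show "x k = 1" unfolding s_def by simp
  qed
qed

lemma alternating_seq_iff_prefix_sums:
  "alternating_seq N x \<longleftrightarrow> (\<forall>K\<le>N. (\<Sum>k=1..K. x k) \<in> {0, 1})"
  using alternating_seq_prefix_sums prefix_sums_imp_alternating_seq by blast

lemma ball_atLeastAtMost_reverse: "(\<forall>k\<in>{1..n}. P (n + 1 - k)) \<longleftrightarrow> (\<forall>j\<in>{1..n::nat}. P j)"
proof -
  have "(\<lambda>k. n + 1 - k) ` {1..n} = {1..n}"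
  proof
    show "{1..n} \<subseteq> (\<lambda>k. n + 1 - k) ` {1..n}"
    proof
      fix j assume "j \<in> {1..n}"
      then have "j = n + 1 - (n + 1 - j)" "n + 1 - j \<in> {1..n}" by auto
      then show "j \<in> (\<lambda>k. n + 1 - k) ` {1..n}" by blast
    qed
  qed auto
  then show ?thesis using Ball_image_comp[of "\<lambda>k. n + 1 - k" "{1..n}" P] by (simp add: comp_def)
qed

lemma zero_between_reverse:
  fixes a b n :: nat and y :: "nat \<Rightarrow> 'a::zero"
  assumes "b \<le> n + 1"
  shows "(\<forall>k. a < k \<and> k < b \<longrightarrow> y (n + 1 - k) = 0) \<longleftrightarrow>
    (\<forall>j. n + 1 - b < j \<and> j < n + 1 - a \<longrightarrow> y j = 0)"
proof (intro iffI allI impI)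
  fix j assume zero: "\<forall>k. a < k \<and> k < b \<longrightarrow> y (n + 1 - k) = 0" and j: "n + 1 - b < j \<and> j < n + 1 - a"
  have "a < n + 1 - j" "n + 1 - j < b" using assms j by auto
  moreover have "n + 1 - (n + 1 - j) = j" using j by auto
  ultimately show "y j = 0" using zero by metis
next
  fix k assume "\<forall>j. n + 1 - b < j \<and> j < n + 1 - a \<longrightarrow> y j = 0" "a < k \<and> k < b"
  moreover have "n + 1 - b < n + 1 - k" "n + 1 - k < n + 1 - a" using assms \<open>a < k \<and> k < b\<close> by auto
  ultimately show "y (n + 1 - k) = 0" by blast
qed

lemma alternating_seq_reverse_iff:
  "alternating_seq n (\<lambda>k. y (n + 1 - k)) \<longleftrightarrow>
     (\<forall>j\<in>{1..n}. y j \<in> {-1, 0, 1}) \<and>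
     (\<forall>j1\<in>{1..n}. \<forall>j2\<in>{1..n}.
        j1 < j2 \<and> y j1 \<noteq> 0 \<and> y j2 \<noteq> 0 \<and> (\<forall>j. j1 < j \<and> j < j2 \<longrightarrow> y j = 0)
        \<longrightarrow> y j2 = - y j1) \<and>
     (\<forall>j\<in>{1..n}. y j \<noteq> 0 \<and> (\<forall>j'. j < j' \<and> j' \<le> n \<longrightarrow> y j' = 0) \<longrightarrow> y j = 1)"
proof -
  let ?between = "\<lambda>j1 j2. \<forall>j. j1 < j \<and> j < j2 \<longrightarrow> y j = 0"
  let ?alternation = "\<lambda>j1 j2. j1 < j2 \<and> y j1 \<noteq> 0 \<and> y j2 \<noteq> 0 \<and> ?between j1 j2 \<longrightarrow> y j2 = - y j1"
  let ?last_one = "\<lambda>j. y j \<noteq> 0 \<and> (\<forall>j'. j < j' \<and> j' \<le> n \<longrightarrow> y j' = 0) \<longrightarrow> y j = 1"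
  let ?reversed_alternation = "\<forall>k1\<in>{1..n}. \<forall>k2\<in>{1..n}. k1 < k2 \<and> y (n + 1 - k1) \<noteq> 0 \<and>
    y (n + 1 - k2) \<noteq> 0 \<and> (\<forall>k. k1 < k \<and> k < k2 \<longrightarrow> y (n + 1 - k) = 0) \<longrightarrow> y (n + 1 - k2) = - y (n + 1 - k1)"
  let ?reversed_first_one = "\<forall>k\<in>{1..n}. y (n + 1 - k) \<noteq> 0 \<and>
    (\<forall>k'. 1 \<le> k' \<and> k' < k \<longrightarrow> y (n + 1 - k') = 0) \<longrightarrow> y (n + 1 - k) = 1"
  have "?reversed_alternation \<longleftrightarrow>
    (\<forall>k1\<in>{1..n}. \<forall>k2\<in>{1..n}. ?alternation (n + 1 - k2) (n + 1 - k1))"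
    using zero_between_reverse[of _ n _ y] by (intro ball_cong refl) auto
  also have "\<dots> \<longleftrightarrow> (\<forall>k1\<in>{1..n}. \<forall>j1\<in>{1..n}. ?alternation j1 (n + 1 - k1))"
    by (intro ball_cong refl ball_atLeastAtMost_reverse)
  also have "\<dots> \<longleftrightarrow> (\<forall>j2\<in>{1..n}. \<forall>j1\<in>{1..n}. ?alternation j1 j2)"
    by (rule ball_atLeastAtMost_reverse)
  finally have alternation: "?reversed_alternation \<longleftrightarrow> (\<forall>j2\<in>{1..n}. \<forall>j1\<in>{1..n}. ?alternation j1 j2)" .
  have "?reversed_first_one \<longleftrightarrow> (\<forall>k\<in>{1..n}. ?last_one (n + 1 - k))"
    using zero_between_reverse[of _ n 0 y] by (intro ball_cong refl) (auto simp: Suc_le_eq)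
  also have "\<dots> \<longleftrightarrow> (\<forall>j\<in>{1..n}. ?last_one j)"
    by (rule ball_atLeastAtMost_reverse)
  finally have last_one: "?reversed_first_one \<longleftrightarrow> (\<forall>j\<in>{1..n}. ?last_one j)" .
  show ?thesis
    unfolding alternating_seq_def alternation last_one ball_atLeastAtMost_reverse[of n "\<lambda>j. y j \<in> {-1, 0, 1}"]
    by blast
qed

lemma partial_asm_iff_alternating_lines:
  "partial_asm m n a \<longleftrightarrow>
     (\<forall>i j. \<not> (i \<in> {1..m} \<and> j \<in> {1..n}) \<longrightarrow> a i j = 0) \<and>
     (\<forall>j\<in>{1..n}. alternating_seq m (\<lambda>i. a i j)) \<and>
     (\<forall>i\<in>{1..m}. alternating_seq n (\<lambda>k. a i (n + 1 - k))) \<and>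
     (\<forall>i\<in>{1..m}. (\<Sum>j=1..n. a i j) \<in> {0, 1}) \<and>
     (\<forall>j\<in>{1..n}. (\<Sum>i=1..m. a i j) \<in> {0, 1})"
  unfolding partial_asm_def alternating_seq_reverse_iff alternating_seq_def ball_conj_distrib
  by (intro iffI; elim conjE; intro conjI; blast)

lemma partial_asm_iff_prefix_sums:
  "partial_asm m n a \<longleftrightarrow>
     (\<forall>i j. \<not> (i \<in> {1..m} \<and> j \<in> {1..n}) \<longrightarrow> a i j = 0) \<and>
     (\<forall>j\<in>{1..n}. \<forall>K\<le>m. (\<Sum>i=1..K. a i j) \<in> {0, 1}) \<and>
     (\<forall>i\<in>{1..m}. \<forall>K\<le>n. (\<Sum>k=1..K. a i (n + 1 - k)) \<in> {0, 1})"
proof -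
  have "(\<Sum>j=1..n. a i j) = (\<Sum>k=1..n. a i (n + 1 - k))" for i
    using sum.atLeastAtMost_rev[of "a i" 1 n] by simp
  then show ?thesis
    unfolding partial_asm_iff_alternating_lines alternating_seq_iff_prefix_sums by auto
qed

definition corner_sum :: "nat \<Rightarrow> (nat \<Rightarrow> nat \<Rightarrow> int) \<Rightarrow> nat \<Rightarrow> nat \<Rightarrow> int" where
  "corner_sum n a i j = (\<Sum>i'=1..i. \<Sum>k=1..j. a i' (n + 1 - k))"

definition asm_to_hfm :: "nat \<Rightarrow> nat \<Rightarrow> (nat \<Rightarrow> nat \<Rightarrow> int) \<Rightarrow> nat \<Rightarrow> nat \<Rightarrow> int" where
  "asm_to_hfm m n a i j = (if i \<le> m \<and> j \<le> n then int i + int j - 2 * corner_sum n a i j else 0)"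

lemma corner_sum_zero [simp]: "corner_sum n a 0 j = 0" "corner_sum n a i 0 = 0"
  unfolding corner_sum_def by simp_all

lemma corner_sum_Suc_row: "corner_sum n a (Suc i) j = corner_sum n a i j + (\<Sum>k=1..j. a (Suc i) (n + 1 - k))"
  unfolding corner_sum_def by simp

lemma corner_sum_Suc_col: "corner_sum n a i (Suc j) = corner_sum n a i j + (\<Sum>i'=1..i. a i' (n - j))"
  unfolding corner_sum_def by (simp add: sum.distrib)

lemma corner_sum_swap: "corner_sum n a i j = (\<Sum>k=1..j. \<Sum>i'=1..i. a i' (n + 1 - k))"
  unfolding corner_sum_def by (rule sum.swap)

lemma asm_to_hfm_hstep:
  assumes "i \<le> m" "k \<in> {1..n}"
  shows "asm_to_hfm m n a i k - asm_to_hfm m n a i (k - 1) = 1 - 2 * (\<Sum>i'=1..i. a i' (n + 1 - k))"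
  using assms by (cases k) (auto simp: asm_to_hfm_def corner_sum_Suc_col)

lemma asm_to_hfm_vstep:
  assumes "i \<in> {1..m}" "j \<le> n"
  shows "asm_to_hfm m n a i j - asm_to_hfm m n a (i - 1) j = 1 - 2 * (\<Sum>k=1..j. a i (n + 1 - k))"
  using assms by (cases i) (auto simp: asm_to_hfm_def corner_sum_Suc_row)

lemma corner_sum_le:
  assumes "partial_asm m n a" "i \<le> m" "j \<le> n"
  shows "corner_sum n a i j \<le> int i" "corner_sum n a i j \<le> int j"
proof -
  have "(\<Sum>k=1..j. a i' (n + 1 - k)) \<in> {0, 1}" if "i' \<in> {1..i}" for i'
    using assms that unfolding partial_asm_iff_prefix_sums by auto
  then have rows: "(\<Sum>k=1..j. a i' (n + 1 - k)) \<le> 1" if "i' \<in> {1..i}" for i'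
    using that by fastforce
  have "(\<Sum>i'=1..i. a i' (n + 1 - k)) \<in> {0, 1}" if "k \<in> {1..j}" for k
    using assms that unfolding partial_asm_iff_prefix_sums by auto
  then have cols: "(\<Sum>i'=1..i. a i' (n + 1 - k)) \<le> 1" if "k \<in> {1..j}" for k
    using that by fastforce
  have "corner_sum n a i j \<le> (\<Sum>i'=1..i. 1)"
    unfolding corner_sum_def by (rule sum_mono) (rule rows)
  then show "corner_sum n a i j \<le> int i" by simp
  have "corner_sum n a i j \<le> (\<Sum>k=1..j. 1)"
    unfolding corner_sum_swap by (rule sum_mono) (rule cols)
  then show "corner_sum n a i j \<le> int j" by simp
qed

lemma asm_to_hfm_partial_hfm:
  assumes a: "partial_asm m n a"
  shows "partial_hfm m n (asm_to_hfm m n a)"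
  unfolding partial_hfm_def
proof (intro conjI allI impI)
  fix i j assume "i \<le> m" "j \<le> n"
  then show "asm_to_hfm m n a i j \<ge> 0"
    using corner_sum_le[OF a] unfolding asm_to_hfm_def by fastforce
next
  fix i j assume ij: "i \<le> m" "j < n"
  then have "(\<Sum>i'=1..i. a i' (n + 1 - Suc j)) \<in> {0, 1}"
    using a unfolding partial_asm_iff_prefix_sums by auto
  then show "\<bar>asm_to_hfm m n a i (Suc j) - asm_to_hfm m n a i j\<bar> = 1"
    using asm_to_hfm_hstep[of i m "Suc j" n a] ij by auto
next
  fix i j assume ij: "i < m" "j \<le> n"
  then have "(\<Sum>k=1..j. a (Suc i) (n + 1 - k)) \<in> {0, 1}"
    using a unfolding partial_asm_iff_prefix_sums by auto
  then show "\<bar>asm_to_hfm m n a (Suc i) j - asm_to_hfm m n a i j\<bar> = 1"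
    using asm_to_hfm_vstep[of "Suc i" m j n a] ij by auto
qed (auto simp: asm_to_hfm_def)

definition hdescent :: "(nat \<Rightarrow> nat \<Rightarrow> int) \<Rightarrow> nat \<Rightarrow> nat \<Rightarrow> int" where
  "hdescent h i k = (if h i k < h i (k - 1) then 1 else 0)"

definition vdescent :: "(nat \<Rightarrow> nat \<Rightarrow> int) \<Rightarrow> nat \<Rightarrow> nat \<Rightarrow> int" where
  "vdescent h i k = (if h i k < h (i - 1) k then 1 else 0)"

definition hfm_to_asm :: "nat \<Rightarrow> nat \<Rightarrow> (nat \<Rightarrow> nat \<Rightarrow> int) \<Rightarrow> nat \<Rightarrow> nat \<Rightarrow> int" where
  "hfm_to_asm m n h i j =
     (if i \<in> {1..m} \<and> j \<in> {1..n} then hdescent h i (n + 1 - j) - hdescent h (i - 1) (n + 1 - j) else 0)"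

lemma hfm_hstep:
  assumes "partial_hfm m n h" "i \<le> m" "k \<in> {1..n}"
  shows "h i k - h i (k - 1) = 1 - 2 * hdescent h i k"
proof -
  have "k - 1 < n" "Suc (k - 1) = k" using assms(3) by auto
  then have "\<bar>h i k - h i (k - 1)\<bar> = 1"
    using assms(1,2) unfolding partial_hfm_def by metis
  then show ?thesis using assms(3) unfolding hdescent_def by auto
qed

lemma hfm_vstep:
  assumes "partial_hfm m n h" "i \<in> {1..m}" "k \<le> n"
  shows "h i k - h (i - 1) k = 1 - 2 * vdescent h i k"
proof -
  have "i - 1 < m" "Suc (i - 1) = i" using assms(2) by auto
  then have "\<bar>h i k - h (i - 1) k\<bar> = 1"
    using assms(1,3) unfolding partial_hfm_def by metis
  then show ?thesis using assms(2) unfolding vdescent_def by auto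
qed

lemma hfm_descents_commute:
  assumes "partial_hfm m n h" "i \<in> {1..m}" "k \<in> {1..n}"
  shows "hdescent h i k - hdescent h (i - 1) k = vdescent h i k - vdescent h i (k - 1)"
proof -
  have "i \<le> m" "i - 1 \<le> m" "k \<le> n" "k - 1 \<le> n" using assms(2,3) by auto
  then have "h i k - h i (k - 1) = 1 - 2 * hdescent h i k"
    "h (i - 1) k - h (i - 1) (k - 1) = 1 - 2 * hdescent h (i - 1) k"
    "h i k - h (i - 1) k = 1 - 2 * vdescent h i k"
    "h i (k - 1) - h (i - 1) (k - 1) = 1 - 2 * vdescent h i (k - 1)"
    using hfm_hstep[OF assms(1) _ assms(3)] hfm_vstep[OF assms(1,2)] by simp_all
  then show ?thesis by linarith
qed

lemma hfm_hdescent_top: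
  assumes "partial_hfm m n h" "k \<in> {1..n}"
  shows "hdescent h 0 k = 0"
  using assms unfolding partial_hfm_def hdescent_def by auto

lemma hfm_vdescent_left:
  assumes "partial_hfm m n h" "i \<in> {1..m}"
  shows "vdescent h i 0 = 0"
  using assms unfolding partial_hfm_def vdescent_def by auto

lemma hdescent_in_01: "hdescent h i k \<in> {0, 1}"
  unfolding hdescent_def by simp

lemma vdescent_in_01: "vdescent h i k \<in> {0, 1}"
  unfolding vdescent_def by simp

lemma hfm_to_asm_partial_asm:
  assumes h: "partial_hfm m n h"
  shows "partial_asm m n (hfm_to_asm m n h)"
  unfolding partial_asm_iff_prefix_sums
proof (intro conjI ballI allI impI)
  fix j K assume j: "j \<in> {1..n}" and K: "K \<le> m"
  have k: "n + 1 - j \<in> {1..n}" using j by auto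
  have "(\<Sum>i=1..K. hfm_to_asm m n h i j) = (\<Sum>i=1..K. hdescent h i (n + 1 - j) - hdescent h (i - 1) (n + 1 - j))"
    unfolding hfm_to_asm_def using j K by (intro sum.cong) auto
  also have "\<dots> = hdescent h K (n + 1 - j)"
    using sum_telescope_atLeast1[of "\<lambda>i. hdescent h i (n + 1 - j)"] hfm_hdescent_top[OF h k] by simp
  finally show "(\<Sum>i=1..K. hfm_to_asm m n h i j) \<in> {0, 1}" using hdescent_in_01 by simp
next
  fix i K assume i: "i \<in> {1..m}" and "K \<le> n"
  then have "(\<Sum>k=1..K. hfm_to_asm m n h i (n + 1 - k)) = (\<Sum>k=1..K. vdescent h i k - vdescent h i (k - 1))"
    unfolding hfm_to_asm_def using hfm_descents_commute[OF h i] by (intro sum.cong) auto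
  also have "\<dots> = vdescent h i K"
    using sum_telescope_atLeast1[of "vdescent h i"] hfm_vdescent_left[OF h i] by simp
  finally show "(\<Sum>k=1..K. hfm_to_asm m n h i (n + 1 - k)) \<in> {0, 1}" using vdescent_in_01 by simp
qed (auto simp: hfm_to_asm_def)

lemma hdescent_asm_to_hfm:
  assumes "partial_asm m n a" "i \<le> m" "k \<in> {1..n}"
  shows "hdescent (asm_to_hfm m n a) i k = (\<Sum>i'=1..i. a i' (n + 1 - k))"
proof -
  have "n + 1 - k \<in> {1..n}" using assms(3) by auto
  then have "(\<Sum>i'=1..i. a i' (n + 1 - k)) \<in> {0, 1}"
    using assms(1,2) unfolding partial_asm_iff_prefix_sums by blast
  then show ?thesis
    using asm_to_hfm_hstep[OF assms(2,3), of a] unfolding hdescent_def by auto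
qed

lemma hfm_to_asm_asm_to_hfm:
  assumes a: "partial_asm m n a"
  shows "hfm_to_asm m n (asm_to_hfm m n a) = a"
proof (intro ext)
  fix i j
  show "hfm_to_asm m n (asm_to_hfm m n a) i j = a i j"
  proof (cases "i \<in> {1..m} \<and> j \<in> {1..n}")
    case True
    then have "n + 1 - j \<in> {1..n}" "i - 1 \<le> m" "n + 1 - (n + 1 - j) = j" by auto
    moreover have "(\<Sum>i'=1..i. a i' j) - (\<Sum>i'=1..i - 1. a i' j) = a i j"
      using True by (cases i) auto
    ultimately show ?thesis
      using True hdescent_asm_to_hfm[OF a] unfolding hfm_to_asm_def by simp
  next
    case False
    then show ?thesis using a unfolding hfm_to_asm_def partial_asm_def by auto
  qed
qed

lemma corner_sum_hfm_to_asm: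
  assumes h: "partial_hfm m n h" and "i \<le> m" "j \<le> n"
  shows "corner_sum n (hfm_to_asm m n h) i j = (\<Sum>k=1..j. hdescent h i k)"
  unfolding corner_sum_swap
proof (rule sum.cong)
  fix k assume k: "k \<in> {1..j}"
  then have k': "k \<in> {1..n}" "n + 1 - k \<in> {1..n}" "n + 1 - (n + 1 - k) = k" using assms by auto
  have "(\<Sum>i'=1..i. hfm_to_asm m n h i' (n + 1 - k)) = (\<Sum>i'=1..i. hdescent h i' k - hdescent h (i' - 1) k)"
    unfolding hfm_to_asm_def using assms k' by (intro sum.cong) auto
  also have "\<dots> = hdescent h i k"
    using sum_telescope_atLeast1[of "\<lambda>i'. hdescent h i' k"] hfm_hdescent_top[OF h k'(1)] by simp
  finally show "(\<Sum>i'=1..i. hfm_to_asm m n h i' (n + 1 - k)) = hdescent h i k" .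
qed simp

lemma hfm_eq_descent_count:
  assumes h: "partial_hfm m n h" and "i \<le> m" "j \<le> n"
  shows "h i j = int i + int j - 2 * (\<Sum>k=1..j. hdescent h i k)"
proof -
  have "h i j - h i 0 = (\<Sum>k=1..j. h i k - h i (k - 1))"
    by (rule sum_telescope_atLeast1[symmetric])
  also have "\<dots> = (\<Sum>k=1..j. 1 - 2 * hdescent h i k)"
    using hfm_hstep[OF h \<open>i \<le> m\<close>] \<open>j \<le> n\<close> by (intro sum.cong) auto
  also have "\<dots> = int j - 2 * (\<Sum>k=1..j. hdescent h i k)"
    by (simp add: sum_subtractf sum_distrib_left)
  finally show ?thesis
    using h \<open>i \<le> m\<close> unfolding partial_hfm_def by simp
qed

lemma asm_to_hfm_hfm_to_asm:
  assumes h: "partial_hfm m n h"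
  shows "asm_to_hfm m n (hfm_to_asm m n h) = h"
proof (intro ext)
  fix i j
  show "asm_to_hfm m n (hfm_to_asm m n h) i j = h i j"
    using h corner_sum_hfm_to_asm[OF h] hfm_eq_descent_count[OF h]
    unfolding asm_to_hfm_def partial_hfm_def by auto
qed

theorem lemma3p10:
  fixes m n :: nat
  assumes "m \<ge> 1" and "n \<ge> 1"
  shows "\<exists>f. bij_betw f (partial_asms m n) (partial_hfms m n)"
proof
  show "bij_betw (asm_to_hfm m n) (partial_asms m n) (partial_hfms m n)"
    unfolding partial_asms_def partial_hfms_def
    by (rule bij_betw_byWitness[where f' = "hfm_to_asm m n"])
      (auto simp: hfm_to_asm_asm_to_hfm asm_to_hfm_hfm_to_asm
        asm_to_hfm_partial_hfm hfm_to_asm_partial_asm)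
qed

end
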